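(* Let $L=\langle S,A,\to\rangle$ be a labelled transition system and $x,y\in\{o,b\}$. Then $\mathrel{\underline{\leftrightarrow}}_{(x,y)}$ has the stuttering property: whenever $t_0\xrightarrow{\tau}t_1\xrightarrow{\tau}\cdots\xrightarrow{\tau}t_k$ with $t_0\mathrel{\underline{\leftrightarrow}}_{(x,y)}t_k$, then $t_i\mathrel{\underline{\leftrightarrow}}_{(x,y)}t_j$ for all $0\le i,j\le k$.
   Context: An LTS is $\langle S,A,\to\rangle$ with states $S$, actions $A$ containing the internal action $\tau$, and $\to\subseteq S\times A\times S$; write $s\xrightarrow{a}t$, and $\twoheadrightarrow$ for the reflexive-transitive closure of $\xrightarrow{\tau}$. For $R\subseteq S\times S$ and $s,s',t$: $s\twoheadrightarrow_{o,R,t}s'$ iff $s\twoheadrightarrow s'$; $s\twoheadrightarrow_{b,R,t}s'$ iff $s\twoheadrightarrow s'$, $t\,R\,s$ and $t\,R\,s'$. For $x,y\in\{o,b\}$, a symmetric $R$ is an $(x,y)$-generic bisimulation if whenever $s\,R\,t$ and $s\xrightarrow{a}s'$, either $a=\tau$ and $s'\,R\,t$, or there exist $t',t_1,t_2$ with $t\twoheadrightarrow_{x,R,s}t_1\xrightarrow{a}t_2\twoheadrightarrow_{y,R,s'}t'$ and $s'\,R\,t'$. $s\mathrel{\underline{\leftrightarrow}}_{(x,y)}t$ iff some $(x,y)$-generic bisimulation relates $s$ and $t$. *)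

theory Defs
  imports Main
begin

datatype mode = Mo | Mb

definition tau_steps :: "('s \<Rightarrow> 'a \<Rightarrow> 's \<Rightarrow> bool) \<Rightarrow> 'a \<Rightarrow> 's \<Rightarrow> 's \<Rightarrow> bool" where
  "tau_steps tr tau = (\<lambda>s s'. tr s tau s')\<^sup>*\<^sup>*"

definition gstep :: "('s \<Rightarrow> 'a \<Rightarrow> 's \<Rightarrow> bool) \<Rightarrow> 'a \<Rightarrow> mode \<Rightarrow> ('s \<Rightarrow> 's \<Rightarrow> bool)
    \<Rightarrow> 's \<Rightarrow> 's \<Rightarrow> 's \<Rightarrow> bool" where
  "gstep tr tau m R t s s' =
     (case m of Mo \<Rightarrow> tau_steps tr tau s s'
              | Mb \<Rightarrow> tau_steps tr tau s s' \<and> R t s \<and> R t s')"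

definition generic_bisim :: "('s \<Rightarrow> 'a \<Rightarrow> 's \<Rightarrow> bool) \<Rightarrow> 'a \<Rightarrow> mode \<Rightarrow> mode
    \<Rightarrow> ('s \<Rightarrow> 's \<Rightarrow> bool) \<Rightarrow> bool" where
  "generic_bisim tr tau x y R \<longleftrightarrow>
     symp R \<and>
     (\<forall>s t a s'. R s t \<and> tr s a s' \<longrightarrow>
        (a = tau \<and> R s' t) \<or>
        (\<exists>t' t1 t2. gstep tr tau x R s t t1 \<and> tr t1 a t2 \<and> gstep tr tau y R s' t2 t' \<and> R s' t'))"

definition gbisimilar :: "('s \<Rightarrow> 'a \<Rightarrow> 's \<Rightarrow> bool) \<Rightarrow> 'a \<Rightarrow> mode \<Rightarrow> mode \<Rightarrow> 's \<Rightarrow> 's \<Rightarrow> bool" where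
  "gbisimilar tr tau x y s t \<longleftrightarrow> (\<exists>R. generic_bisim tr tau x y R \<and> R s t)"

end

theory Submission
  imports Defs
begin

text \<open>Let \<open>B\<close> be a reflexive generic bisimulation, and add to it every pair \<open>(m, n)\<close>, in
either order, such that \<open>r \<Rightarrow> m \<Rightarrow> n \<Rightarrow> z\<close> by \<open>\<tau>\<close>-steps for some \<open>r B z\<close>. The result is again a
generic bisimulation. To answer a step \<open>m \<midarrow>a\<rightarrow> m'\<close> from \<open>n\<close>, walk along the \<open>\<tau>\<close>-path from \<open>r\<close>
to \<open>m\<close>, answering each of its steps with \<open>B\<close> from the \<open>z\<close>-side. These answers are \<open>\<tau>\<close>-runs
themselves, so the partner of the current state stays \<open>\<tau>\<close>-reachable from \<open>n\<close>; once \<open>m\<close> is reached,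
\<open>B\<close> answers the step \<open>a\<close>, and the \<open>\<tau>\<close>-run from \<open>n\<close> to the partner is prepended to that answer.
All states of a \<open>\<tau>\<close>-path from \<open>t\<^sub>0\<close> to a bisimilar \<open>t\<^sub>k\<close> are related in this way.\<close>

lemma tau_steps_refl [simp]: "tau_steps tr tau s s"
  by (simp add: tau_steps_def)

lemma tau_steps_trans: "tau_steps tr tau s u \<Longrightarrow> tau_steps tr tau u v \<Longrightarrow> tau_steps tr tau s v"
  unfolding tau_steps_def by (rule rtranclp_trans)

lemma tau_steps_step: "tr s tau u \<Longrightarrow> tau_steps tr tau s u"
  unfolding tau_steps_def by auto

lemma tau_steps_along_path:
  assumes "\<forall>i<k. tr (t i) tau (t (Suc i))" and "i \<le> j" and "j \<le> k"
  shows "tau_steps tr tau (t i) (t j)"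
  using assms(2,3)
proof (induction j rule: dec_induct)
  case (step n)
  then have "tau_steps tr tau (t i) (t n)" and "tr (t n) tau (t (Suc n))"
    using assms(1) by auto
  then show ?case by (blast intro: tau_steps_trans tau_steps_step)
qed simp

lemma gstep_tau_steps: "gstep tr tau m R s t u \<Longrightarrow> tau_steps tr tau t u"
  by (cases m) (auto simp: gstep_def)

lemma gstepI: "tau_steps tr tau t u \<Longrightarrow> R s t \<Longrightarrow> R s u \<Longrightarrow> gstep tr tau m R s t u"
  by (cases m) (auto simp: gstep_def)

lemma gstep_mono: "gstep tr tau m R s t u \<Longrightarrow> R \<le> Q \<Longrightarrow> gstep tr tau m Q s t u"
  by (cases m) (auto simp: gstep_def)

lemma gstep_tau_prefix:
  "tau_steps tr tau t\<^sub>0 t \<Longrightarrow> gstep tr tau m R s t u \<Longrightarrow> R s t\<^sub>0 \<Longrightarrow> gstep tr tau m R s t\<^sub>0 u"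
  by (cases m) (auto simp: gstep_def intro: tau_steps_trans)

text \<open>In mode \<open>b\<close> the run after the visible step may stop at once, since its start is already
related; in mode \<open>o\<close> it has to run on to the related end point.\<close>

lemma gstep_related_end:
  assumes "gstep tr tau m R s t t'" and "R s t'"
  obtains u where "R s u" and "tau_steps tr tau t u" and "\<And>Q s'. Q s' u \<Longrightarrow> gstep tr tau m Q s' t u"
proof (cases m)
  case Mo
  with assms show ?thesis by (intro that[of t']) (auto simp: gstep_def)
next
  case Mb
  with assms show ?thesis by (intro that[of t]) (auto simp: gstep_def)
qed

definition answers :: "('s \<Rightarrow> 'a \<Rightarrow> 's \<Rightarrow> bool) \<Rightarrow> 'a \<Rightarrow> mode \<Rightarrow> mode \<Rightarrow> ('s \<Rightarrow> 's \<Rightarrow> bool)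
    \<Rightarrow> 's \<Rightarrow> 's \<Rightarrow> 'a \<Rightarrow> 's \<Rightarrow> bool" where
  "answers tr tau x y R s t a s' \<longleftrightarrow>
     (\<exists>t' t1 t2. gstep tr tau x R s t t1 \<and> tr t1 a t2 \<and> gstep tr tau y R s' t2 t' \<and> R s' t')"

lemma generic_bisimI:
  assumes "symp R"
    and "\<And>s t a s'. R s t \<Longrightarrow> tr s a s' \<Longrightarrow> (a = tau \<and> R s' t) \<or> answers tr tau x y R s t a s'"
  shows "generic_bisim tr tau x y R"
  using assms by (auto simp: generic_bisim_def answers_def)

lemma generic_bisimD:
  "generic_bisim tr tau x y R \<Longrightarrow> R s t \<Longrightarrow> tr s a s' \<Longrightarrow>
     (a = tau \<and> R s' t) \<or> answers tr tau x y R s t a s'"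
  by (auto simp: generic_bisim_def answers_def)

lemma generic_bisim_symp: "generic_bisim tr tau x y R \<Longrightarrow> symp R"
  by (simp add: generic_bisim_def)

lemma answers_mono: "answers tr tau x y R s t a s' \<Longrightarrow> R \<le> Q \<Longrightarrow> answers tr tau x y Q s t a s'"
  unfolding answers_def by (meson gstep_mono predicate2D)

lemma matched_mono:
  assumes "(a = tau \<and> R s' t) \<or> answers tr tau x y R s t a s'" and "R \<le> Q"
  shows "(a = tau \<and> Q s' t) \<or> answers tr tau x y Q s t a s'"
  using assms answers_mono[of tr tau x y R s t a s' Q] predicate2D[of R Q s' t] by blast

lemma answers_tau_prefix:
  "answers tr tau x y R s t a s' \<Longrightarrow> tau_steps tr tau t\<^sub>0 t \<Longrightarrow> R s t\<^sub>0 \<Longrightarrow> answers tr tau x y R s t\<^sub>0 a s'"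
  unfolding answers_def by (meson gstep_tau_prefix)

lemma generic_bisim_reflcl:
  assumes "generic_bisim tr tau x y R"
  shows "generic_bisim tr tau x y (\<lambda>s t. R s t \<or> s = t)"
proof (rule generic_bisimI)
  show "symp (\<lambda>s t. R s t \<or> s = t)"
    using generic_bisim_symp[OF assms] by (auto simp: symp_def)
next
  fix s t a s'
  assume "R s t \<or> s = t" and step: "tr s a s'"
  then consider "R s t" | "s = t" by blast
  then show "(a = tau \<and> (R s' t \<or> s' = t)) \<or> answers tr tau x y (\<lambda>s t. R s t \<or> s = t) s t a s'"
  proof cases
    case 1
    show ?thesis
      by (rule matched_mono[OF generic_bisimD[OF assms 1 step]]) auto
  next
    case 2
    then have "gstep tr tau x (\<lambda>s t. R s t \<or> s = t) s t s"
      and "gstep tr tau y (\<lambda>s t. R s t \<or> s = t) s' s' s'"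
      by (auto intro: gstepI)
    then show ?thesis
      using step unfolding answers_def by blast
  qed
qed

definition stutter_pair :: "('s \<Rightarrow> 'a \<Rightarrow> 's \<Rightarrow> bool) \<Rightarrow> 'a \<Rightarrow> ('s \<Rightarrow> 's \<Rightarrow> bool) \<Rightarrow> 's \<Rightarrow> 's \<Rightarrow> bool" where
  "stutter_pair tr tau B m n \<longleftrightarrow>
     (\<exists>r z. tau_steps tr tau r m \<and> tau_steps tr tau m n \<and> tau_steps tr tau n z \<and> B r z)"

definition stutter_closure :: "('s \<Rightarrow> 'a \<Rightarrow> 's \<Rightarrow> bool) \<Rightarrow> 'a \<Rightarrow> ('s \<Rightarrow> 's \<Rightarrow> bool) \<Rightarrow> 's \<Rightarrow> 's \<Rightarrow> bool" where
  "stutter_closure tr tau B m n \<longleftrightarrow> B m n \<or> stutter_pair tr tau B m n \<or> stutter_pair tr tau B n m"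

lemma le_stutter_closure: "B \<le> stutter_closure tr tau B"
  by (auto simp: stutter_closure_def)

lemma stutter_closure_symp: "symp B \<Longrightarrow> symp (stutter_closure tr tau B)"
  by (auto simp: symp_def stutter_closure_def)

lemma stutter_closureI:
  "tau_steps tr tau r m \<Longrightarrow> tau_steps tr tau m n \<Longrightarrow> tau_steps tr tau n z \<Longrightarrow> B r z
    \<Longrightarrow> stutter_closure tr tau B m n"
  by (auto simp: stutter_closure_def stutter_pair_def)

lemma generic_bisim_tau_step_cases:
  assumes "generic_bisim tr tau x y B" and "B r z" and "tr r tau r\<^sub>1"
  obtains "B r\<^sub>1 z"
  | v\<^sub>1 v\<^sub>2 z' where "gstep tr tau x B r z v\<^sub>1" and "tr v\<^sub>1 tau v\<^sub>2" and "tau_steps tr tau v\<^sub>2 z'"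
      and "B r\<^sub>1 z'" and "\<And>Q s'. Q s' z' \<Longrightarrow> gstep tr tau y Q s' v\<^sub>2 z'"
proof -
  from generic_bisimD[OF assms]
  consider "B r\<^sub>1 z" | v' v\<^sub>1 v\<^sub>2 where "gstep tr tau x B r z v\<^sub>1" "tr v\<^sub>1 tau v\<^sub>2"
      "gstep tr tau y B r\<^sub>1 v\<^sub>2 v'" "B r\<^sub>1 v'"
    unfolding answers_def by blast
  then show ?thesis
  proof cases
    case 2
    from gstep_related_end[OF 2(3,4)] obtain z' where "tau_steps tr tau v\<^sub>2 z'" "B r\<^sub>1 z'"
        "\<And>Q s'. Q s' z' \<Longrightarrow> gstep tr tau y Q s' v\<^sub>2 z'"
      by metis
    with 2(1,2) show ?thesis by (rule that(2))
  qed (rule that(1))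
qed

lemma stutter_closure_answers_on_path:
  assumes bis: "generic_bisim tr tau x y B"
    and path: "tau_steps tr tau r m" and step: "tr m a m'"
  shows "B r z \<Longrightarrow> tau_steps tr tau m z \<Longrightarrow>
    (a = tau \<and> stutter_closure tr tau B m' z) \<or> answers tr tau x y (stutter_closure tr tau B) m z a m'"
  using path[unfolded tau_steps_def]
proof (induction arbitrary: z rule: converse_rtranclp_induct)
  case base
  show ?case
    using matched_mono[OF generic_bisimD[OF bis base.prems(1) step] le_stutter_closure] .
next
  case (step r r\<^sub>1)
  let ?Q = "stutter_closure tr tau B"
  have r_m: "tau_steps tr tau r m"
    using step.hyps unfolding tau_steps_def by (rule converse_rtranclp_into_rtranclp)
  have Q_m_z: "?Q m z"
    using stutter_closureI[where B = B, OF r_m step.prems(2) tau_steps_refl[of tr tau z] step.prems(1)] .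
  from bis \<open>B r z\<close> step.hyps(1) show ?case
  proof (cases rule: generic_bisim_tau_step_cases)
    case 1
    show ?thesis using step.IH[OF 1 step.prems(2)] .
  next
    case (2 v\<^sub>1 v\<^sub>2 z')
    have z_v\<^sub>1: "tau_steps tr tau z v\<^sub>1"
      using 2(1) by (rule gstep_tau_steps)
    have z_z': "tau_steps tr tau z z'"
      using tau_steps_trans[OF z_v\<^sub>1 tau_steps_trans[OF tau_steps_step[of tr, OF 2(2)] 2(3)]] .
    have "(a = tau \<and> ?Q m' z') \<or> answers tr tau x y ?Q m z' a m'"
      using step.IH[OF 2(4) tau_steps_trans[OF step.prems(2) z_z']] .
    then show ?thesis
    proof
      assume "a = tau \<and> ?Q m' z'"
      moreover have "gstep tr tau x ?Q m z v\<^sub>1"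
      proof (cases x)
        case Mo
        then show ?thesis using z_v\<^sub>1 by (simp add: gstep_def)
      next
        case Mb
        then have "B r v\<^sub>1" using 2(1) by (simp add: gstep_def)
        then have "?Q m v\<^sub>1"
          by (rule stutter_closureI[OF r_m tau_steps_trans[OF step.prems(2) z_v\<^sub>1] tau_steps_refl])
        with z_v\<^sub>1 Q_m_z show ?thesis by (simp add: gstepI)
      qed
      ultimately show ?thesis
        using 2(2) 2(5)[of ?Q m'] unfolding answers_def by blast
    next
      assume "answers tr tau x y ?Q m z' a m'"
      from answers_tau_prefix[OF this z_z' Q_m_z] show ?thesis ..
    qed
  qed
qed

lemma stutter_pair_matched:
  assumes bis: "generic_bisim tr tau x y B"
    and "stutter_pair tr tau B s u" and step: "tr s a s'"
  shows "(a = tau \<and> stutter_closure tr tau B s' u) \<or> answers tr tau x y (stutter_closure tr tau B) s u a s'"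
proof -
  let ?Q = "stutter_closure tr tau B"
  obtain r z where r_s: "tau_steps tr tau r s" and s_u: "tau_steps tr tau s u"
    and u_z: "tau_steps tr tau u z" and "B r z"
    using assms(2) unfolding stutter_pair_def by blast
  have Q_s_u: "?Q s u"
    using assms(2) by (simp add: stutter_closure_def)
  have "(a = tau \<and> ?Q s' z) \<or> answers tr tau x y ?Q s z a s'"
    using stutter_closure_answers_on_path[OF bis r_s step \<open>B r z\<close> tau_steps_trans[OF s_u u_z]] .
  then show ?thesis
  proof
    assume tau_z: "a = tau \<and> ?Q s' z"
    from u_z[unfolded tau_steps_def] show ?thesis
    proof (cases rule: rtranclp.cases)
      case rtrancl_refl
      then show ?thesis using tau_z by blast
    next
      txt \<open>Answer the \<open>\<tau>\<close>-step by the last step of the run from \<open>u\<close> to \<open>z\<close>.\<close>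
      case (rtrancl_into_rtrancl n)
      then have u_n: "tau_steps tr tau u n" by (simp add: tau_steps_def)
      have "?Q s n"
        using stutter_closureI[where B = B, OF r_s tau_steps_trans[OF s_u u_n]
            tau_steps_step[of tr, OF rtrancl_into_rtrancl(2)] \<open>B r z\<close>] .
      then have "gstep tr tau x ?Q s u n" and "gstep tr tau y ?Q s' z z"
        using u_n Q_s_u tau_z by (auto intro: gstepI)
      then show ?thesis
        using tau_z rtrancl_into_rtrancl(2) unfolding answers_def by blast
    qed
  next
    assume "answers tr tau x y ?Q s z a s'"
    from answers_tau_prefix[OF this u_z Q_s_u] show ?thesis ..
  qed
qed

lemma generic_bisim_stutter_closure:
  assumes bis: "generic_bisim tr tau x y B" and refl: "\<And>s. B s s"
  shows "generic_bisim tr tau x y (stutter_closure tr tau B)"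
proof (rule generic_bisimI)
  let ?Q = "stutter_closure tr tau B"
  show "symp ?Q" using generic_bisim_symp[OF bis] by (rule stutter_closure_symp)
  have Q_refl: "?Q s s" for s using refl by (simp add: stutter_closure_def)
  fix s u a s'
  assume Q_s_u: "?Q s u" and step: "tr s a s'"
  then consider "B s u" | "stutter_pair tr tau B s u" | "stutter_pair tr tau B u s"
    unfolding stutter_closure_def by blast
  then show "(a = tau \<and> ?Q s' u) \<or> answers tr tau x y ?Q s u a s'"
  proof cases
    case 1
    show ?thesis
      using matched_mono[OF generic_bisimD[OF bis 1 step] le_stutter_closure] .
  next
    case 2
    show ?thesis using stutter_pair_matched[OF bis 2 step] .
  next
    txt \<open>Here \<open>u \<Rightarrow> s\<close>, so \<open>u\<close> answers by first catching up with \<open>s\<close>.\<close>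
    case 3
    then have "tau_steps tr tau u s" unfolding stutter_pair_def by blast
    then have "gstep tr tau x ?Q s u s" and "gstep tr tau y ?Q s' s' s'"
      using Q_s_u Q_refl by (auto intro: gstepI)
    then show ?thesis
      using Q_refl step unfolding answers_def by blast
  qed
qed

theorem lemma4p8:
  fixes tr :: "'s \<Rightarrow> 'a \<Rightarrow> 's \<Rightarrow> bool" and tau :: 'a and x y :: mode
    and t :: "nat \<Rightarrow> 's" and k :: nat
  assumes "\<forall>i<k. tr (t i) tau (t (Suc i))"
    and "gbisimilar tr tau x y (t 0) (t k)"
  shows "\<forall>i\<le>k. \<forall>j\<le>k. gbisimilar tr tau x y (t i) (t j)"
proof -
  obtain R where R: "generic_bisim tr tau x y R" and "R (t 0) (t k)"
    using assms(2) unfolding gbisimilar_def by blast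
  define B where "B = (\<lambda>s u. R s u \<or> s = u)"
  have bis: "generic_bisim tr tau x y (stutter_closure tr tau B)"
    unfolding B_def using generic_bisim_reflcl[OF R] by (rule generic_bisim_stutter_closure) simp
  have ordered: "stutter_closure tr tau B (t i) (t j)" if "i \<le> j" "j \<le> k" for i j
  proof (rule stutter_closureI)
    show "tau_steps tr tau (t 0) (t i)" "tau_steps tr tau (t i) (t j)" "tau_steps tr tau (t j) (t k)"
      using tau_steps_along_path[where tr = tr and t = t, OF assms(1)] that by simp_all
    show "B (t 0) (t k)" using \<open>R (t 0) (t k)\<close> by (simp add: B_def)
  qed
  have "stutter_closure tr tau B (t i) (t j)" if "i \<le> k" "j \<le> k" for i j
    using ordered[of i j] ordered[of j i] generic_bisim_symp[OF bis] that
    by (cases "i \<le> j") (auto dest: sympD)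
  with bis show ?thesis unfolding gbisimilar_def by blast
qed

end
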